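(* Let $D$ be a convex subset of a topological vector space $X$, $K$ a nonempty set, and $C$ a cone with nonempty interior in a topological vector space $Y$. Let $f: D\times K\rightrightarrows Y$ and $g: D\times D\rightrightarrows Y$ be set-valued mappings satisfying: (i) for each $y\in K$, the set $\{x\in D: f(x,y)\not\subseteq -\operatorname{int}C\}$ is compactly closed; (ii) for any nonempty finite subset $A$ of $D$ and all $z\in\operatorname{co}(A)$, there exists $x\in A$ such that $g(x,z)\subseteq -C$; (iii) for each $y\in K$ there exists $z\in D$ such that for all $x\in D$, $g(z,x)\subseteq -C$ implies $f(x,y)\not\subseteq -\operatorname{int}C$; (iv) there exist a nonempty compact subset $M$ of $D$ and a finite subset $L$ of $K$ such that for each $x\in D\setminus M$ there exists $y\in L$ with $f(x,y)\subseteq -\operatorname{int}C$. Then there exists $\bar x\in M$ such that $f(\bar x,y)\not\subseteq -\operatorname{int}C$ for all $y\in K$.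
   Context: A subset $A$ of a topological space $X$ is compactly closed if for every compact subset $M$ of $X$ the set $A\cap M$ is closed in $M$. $\operatorname{co}(A)$ denotes the convex hull of $A$, and $\operatorname{int}C$ the interior of $C$. *)

theory Defs
  imports "HOL-Analysis.Analysis"
begin

definition is_tvs :: "('a::{real_vector,topological_space}) itself \<Rightarrow> bool" where
  "is_tvs _ \<longleftrightarrow>
     continuous_on UNIV (\<lambda>p::'a \<times> 'a. fst p + snd p) \<and>
     continuous_on UNIV (\<lambda>p::real \<times> 'a. fst p *\<^sub>R snd p)"

definition compactly_closed :: "'a::topological_space set \<Rightarrow> bool" where
  "compactly_closed A \<longleftrightarrow>
     (\<forall>M. compact M \<longrightarrow> closedin (top_of_set M) (A \<inter> M))"

end

(*
  Let G y be the set of x \<in> D for which f(x,y) is not contained in -int C. Choosing for each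
  y \<in> K the point z y of (iii), condition (ii) says that a \<mapsto> \<Inter>{G y | z y = a} is a KKM map,
  so the compactly closed sets G y have the finite intersection property. By (iv) every finite
  intersection that includes the sets G y, y \<in> L, lies in the compact set M, and compactness of
  M yields a point common to all G y.

  The KKM principle in a topological vector space is pulled back along t \<mapsto> \<Sum>i. t i a i to the
  standard simplex, where it follows from Brouwer's fixed point theorem. Brouwer's theorem is
  derived from Kuhn's lemma for cubes in nat \<Rightarrow> real: the dimension is the size of a finite
  subset of D, so it varies and cannot be a type parameter.
*)
theory Submission
  imports Defs
begin

lemma tendsto_fun_iff:
  fixes f :: "'a \<Rightarrow> 'i \<Rightarrow> 'b::topological_space"
  shows "(f \<longlongrightarrow> l) F \<longleftrightarrow> (\<forall>i. ((\<lambda>x. f x i) \<longlongrightarrow> l i) F)"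
proof -
  have "(f \<longlongrightarrow> l) F \<longleftrightarrow> limitin (product_topology (\<lambda>i. euclidean) UNIV) f l F"
    by (simp add: euclidean_product_topology)
  also have "\<dots> \<longleftrightarrow> (\<forall>i. ((\<lambda>x. f x i) \<longlongrightarrow> l i) F)"
    by (simp add: limitin_componentwise)
  finally show ?thesis .
qed

lemma continuous_on_coordinate [continuous_intros]:
  "continuous_on S (\<lambda>x::'i \<Rightarrow> 'b::topological_space. x i)"
  by (rule continuous_on_subset[OF continuous_on_product_coordinates]) simp

definition unit_cube :: "nat \<Rightarrow> (nat \<Rightarrow> real) set" where
  "unit_cube n = {x. (\<forall>i<n. 0 \<le> x i \<and> x i \<le> 1) \<and> (\<forall>i\<ge>n. x i = 0)}"

lemma compact_unit_cube: "compact (unit_cube n)"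
proof -
  have "unit_cube n = PiE UNIV (\<lambda>i. if i < n then {0..1} else {0})"
    by (rule set_eqI) (simp add: PiE_UNIV_domain Pi_iff unit_cube_def all_conj_distrib not_less imp_conjR)
  then have "compactin (product_topology (\<lambda>i. euclidean) UNIV) (unit_cube n)"
    by (simp add: compactin_PiE)
  then show ?thesis
    by (simp add: euclidean_product_topology)
qed

lemma unit_cube_approximate_fixpoint:
  fixes f :: "(nat \<Rightarrow> real) \<Rightarrow> nat \<Rightarrow> real" and m :: nat
  assumes f: "f \<in> unit_cube n \<rightarrow> unit_cube n" and m: "0 < m"
  shows "\<exists>z\<in>unit_cube n. \<forall>i<n. \<exists>u\<in>unit_cube n. \<exists>v\<in>unit_cube n.
           u i \<le> f u i \<and> f v i \<le> v i \<and> (\<forall>j. \<bar>u j - z j\<bar> \<le> 1 / m \<and> \<bar>v j - z j\<bar> \<le> 1 / m)"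
proof -
  define lab :: "(nat \<Rightarrow> real) \<Rightarrow> nat \<Rightarrow> nat" where
    "lab x i = (if x i = 0 then 0 else if x i = 1 then 1 else if x i \<le> f x i then 0 else 1)" for x i
  have lab01: "lab x i = 0 \<or> lab x i = 1" for x i
    by (simp add: lab_def)
  have lab0: "x i \<le> f x i" if "x \<in> unit_cube n" "i < n" "lab x i = 0" for x i
  proof -
    have "f x \<in> unit_cube n"
      using f that(1) by blast
    then have "0 \<le> f x i"
      using that(2) by (simp add: unit_cube_def)
    then show ?thesis
      using that(3) by (auto simp: lab_def split: if_splits)
  qed
  have lab1: "f x i \<le> x i" if "x \<in> unit_cube n" "i < n" "lab x i = 1" for x i
  proof -
    have "f x \<in> unit_cube n"
      using f that(1) by blast
    then have "f x i \<le> 1"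
      using that(2) by (simp add: unit_cube_def)
    then show ?thesis
      using that(3) by (auto simp: lab_def split: if_splits)
  qed
  define grid where "grid q = (\<lambda>j. if j < n then real (q j) / m else 0)" for q :: "nat \<Rightarrow> nat"
  have grid_cube: "grid q \<in> unit_cube n" if "\<forall>j<n. q j \<le> m" for q
    using that m by (simp add: grid_def unit_cube_def)
  obtain q where q: "\<forall>i<n. q i < m"
    and adj: "\<forall>i<n. \<exists>r s. (\<forall>j<n. q j \<le> r j \<and> r j \<le> q j + 1) \<and> (\<forall>j<n. q j \<le> s j \<and> s j \<le> q j + 1)
                \<and> lab (grid r) i \<noteq> lab (grid s) i"
    by (rule kuhn_lemma[of m n "\<lambda>q i. lab (grid q) i"]) (use m in \<open>auto simp: lab_def grid_def\<close>)
  have near: "grid r \<in> unit_cube n \<and> (\<forall>j. \<bar>grid r j - grid q j\<bar> \<le> 1 / m)"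
    if "\<forall>j<n. q j \<le> r j \<and> r j \<le> q j + 1" for r
  proof -
    have "\<bar>grid r j - grid q j\<bar> \<le> 1 / m" for j
      using that m by (auto simp: grid_def abs_le_iff diff_divide_distrib [symmetric] divide_right_mono)
    moreover have "\<forall>j<n. r j \<le> m" using that q by (metis Suc_eq_plus1 Suc_leI le_trans)
    ultimately show ?thesis using grid_cube by blast
  qed
  have "grid q \<in> unit_cube n" using q by (intro grid_cube) (auto simp: less_imp_le)
  moreover have "\<exists>u\<in>unit_cube n. \<exists>v\<in>unit_cube n.
      u i \<le> f u i \<and> f v i \<le> v i \<and> (\<forall>j. \<bar>u j - grid q j\<bar> \<le> 1 / m \<and> \<bar>v j - grid q j\<bar> \<le> 1 / m)"
    if i: "i < n" for i
  proof -
    obtain r s where r: "\<forall>j<n. q j \<le> r j \<and> r j \<le> q j + 1" and s: "\<forall>j<n. q j \<le> s j \<and> s j \<le> q j + 1"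
      and rs: "lab (grid r) i \<noteq> lab (grid s) i"
      using adj i by blast
    have "lab (grid r) i = 0 \<and> lab (grid s) i = 1 \<or> lab (grid r) i = 1 \<and> lab (grid s) i = 0"
      using rs lab01[of "grid r" i] lab01[of "grid s" i] by auto
    then show ?thesis
    proof
      assume "lab (grid r) i = 0 \<and> lab (grid s) i = 1"
      then show ?thesis
        using near[OF r] near[OF s] lab0[of "grid r" i] lab1[of "grid s" i] i by blast
    next
      assume "lab (grid r) i = 1 \<and> lab (grid s) i = 0"
      then show ?thesis
        using near[OF r] near[OF s] lab0[of "grid s" i] lab1[of "grid r" i] i by blast
    qed
  qed
  ultimately show ?thesis by blast
qed

lemma tendsto_fun_approx:
  fixes W Z :: "nat \<Rightarrow> 'i \<Rightarrow> real"
  assumes Z: "Z \<longlonglongrightarrow> z" and W: "\<And>k j. \<bar>W k j - Z k j\<bar> \<le> e k" and e: "e \<longlonglongrightarrow> 0"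
  shows "W \<longlonglongrightarrow> z"
proof -
  have "(\<lambda>k. W k j) \<longlonglongrightarrow> z j" for j
  proof -
    have "(\<lambda>k. W k j - Z k j) \<longlonglongrightarrow> 0"
      by (rule Lim_null_comparison[OF _ e]) (use W in auto)
    moreover have "(\<lambda>k. Z k j) \<longlonglongrightarrow> z j"
      using Z by (simp add: tendsto_fun_iff)
    ultimately have "(\<lambda>k. (W k j - Z k j) + Z k j) \<longlonglongrightarrow> 0 + z j"
      by (rule tendsto_add)
    then show ?thesis
      by simp
  qed
  then show ?thesis
    by (simp add: tendsto_fun_iff)
qed

theorem brouwer_unit_cube:
  assumes cont: "continuous_on (unit_cube n) f" and f: "f \<in> unit_cube n \<rightarrow> unit_cube n"
  shows "\<exists>x\<in>unit_cube n. f x = x"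
proof -
  have "\<forall>m. \<exists>z\<in>unit_cube n. \<forall>i<n. \<exists>u\<in>unit_cube n. \<exists>v\<in>unit_cube n.
          u i \<le> f u i \<and> f v i \<le> v i \<and>
          (\<forall>j. \<bar>u j - z j\<bar> \<le> 1 / Suc m \<and> \<bar>v j - z j\<bar> \<le> 1 / Suc m)"
    by (intro allI unit_cube_approximate_fixpoint[OF f]) simp
  then obtain Z U V where Z: "\<And>m. Z m \<in> unit_cube n"
    and UV: "\<And>m i. i < n \<Longrightarrow> U m i \<in> unit_cube n \<and> V m i \<in> unit_cube n \<and>
               U m i i \<le> f (U m i) i \<and> f (V m i) i \<le> V m i i \<and>
               (\<forall>j. \<bar>U m i j - Z m j\<bar> \<le> 1 / Suc m \<and> \<bar>V m i j - Z m j\<bar> \<le> 1 / Suc m)"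
    by metis
  obtain z r where z: "z \<in> unit_cube n" and r: "strict_mono r" and Zr: "(Z \<circ> r) \<longlonglongrightarrow> z"
    using compact_imp_seq_compact[OF compact_unit_cube] Z by (metis seq_compactE)
  have e: "(\<lambda>k. 1 / real (Suc (r k))) \<longlonglongrightarrow> 0"
    using LIMSEQ_subseq_LIMSEQ[OF LIMSEQ_inverse_real_of_nat r] by (simp add: o_def inverse_eq_divide)
  have lim: "(\<lambda>k. W k i) \<longlonglongrightarrow> z i \<and> (\<lambda>k. f (W k) i) \<longlonglongrightarrow> f z i"
    if W: "\<And>k. W k \<in> unit_cube n" "\<And>k j. \<bar>W k j - Z (r k) j\<bar> \<le> 1 / Suc (r k)" for W i
  proof -
    have "W \<longlonglongrightarrow> z"
      by (rule tendsto_fun_approx[OF Zr _ e]) (use W(2) in simp)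
    moreover have "(\<lambda>k. f (W k)) \<longlonglongrightarrow> f z"
      using continuous_on_tendsto_compose[OF cont calculation z] W by simp
    ultimately show ?thesis
      by (simp add: tendsto_fun_iff)
  qed
  have "f z i = z i" for i
  proof (cases "i < n")
    case True
    note UVi = UV[OF True]
    have lU: "(\<lambda>k. U (r k) i i) \<longlonglongrightarrow> z i \<and> (\<lambda>k. f (U (r k) i) i) \<longlonglongrightarrow> f z i"
      by (rule lim) (use UVi in auto)
    have lV: "(\<lambda>k. V (r k) i i) \<longlonglongrightarrow> z i \<and> (\<lambda>k. f (V (r k) i) i) \<longlonglongrightarrow> f z i"
      by (rule lim) (use UVi in auto)
    have "z i \<le> f z i"
      by (rule tendsto_le[OF trivial_limit_sequentially conjunct2[OF lU] conjunct1[OF lU]])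
        (simp add: UVi)
    moreover have "f z i \<le> z i"
      by (rule tendsto_le[OF trivial_limit_sequentially conjunct1[OF lV] conjunct2[OF lV]])
        (simp add: UVi)
    ultimately show ?thesis by simp
  next
    case False
    have "f z \<in> unit_cube n"
      using f z by blast
    with False z show ?thesis
      by (simp add: unit_cube_def)
  qed
  then show ?thesis
    using z by blast
qed

text \<open>The definition of HOL-Homology's theory Simplices. Importing that theory would make \<open>cone\<close>
  denote the cone of cardinal arithmetic instead of the convex cone.\<close>

definition standard_simplex :: "nat \<Rightarrow> (nat \<Rightarrow> real) set" where
  "standard_simplex p =
     {x. (\<forall>i. 0 \<le> x i \<and> x i \<le> 1) \<and> (\<forall>i>p. x i = 0) \<and> (\<Sum>i\<le>p. x i) = 1}"

lemma standard_simplex_eq: "standard_simplex p = unit_cube (Suc p) \<inter> {x. (\<Sum>i\<le>p. x i) = 1}"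
proof -
  have "x \<in> unit_cube (Suc p) \<longleftrightarrow> (\<forall>i. 0 \<le> x i \<and> x i \<le> 1) \<and> (\<forall>i>p. x i = 0)" for x
    unfolding unit_cube_def mem_Collect_eq by (metis Suc_le_eq less_Suc_eq_le not_less order_refl zero_le_one)
  then show ?thesis
    by (auto simp: standard_simplex_def)
qed

lemma compact_standard_simplex: "compact (standard_simplex p)"
proof -
  have "closed {x::nat \<Rightarrow> real. (\<Sum>i\<le>p. x i) = 1}"
    by (intro closed_Collect_eq continuous_intros)
  then show ?thesis
    unfolding standard_simplex_eq using compact_Int_closed compact_unit_cube by blast
qed

lemma standard_simplex_retract_of_unit_cube:
  "standard_simplex p retract_of unit_cube (Suc p)"
proof -
  define s where "s x = (\<Sum>j\<le>p. x j)" for x :: "nat \<Rightarrow> real"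
  define r where "r x = (\<lambda>i. if i \<le> p then (x i + max 0 (1 - s x) / Suc p) / max 1 (s x) else 0)"
    for x :: "nat \<Rightarrow> real"
  have "standard_simplex p \<subseteq> unit_cube (Suc p)"
    by (simp add: standard_simplex_eq)
  moreover have "continuous_on (unit_cube (Suc p)) (\<lambda>x. r x i)" for i
    by (cases "i \<le> p")
      (auto simp: r_def s_def intro!: continuous_intros)
  then have "continuous_on (unit_cube (Suc p)) r"
    by (rule continuous_on_coordinatewise_then_product)
  moreover have "r x \<in> standard_simplex p" if x: "x \<in> unit_cube (Suc p)" for x
  proof -
    have x0: "0 \<le> x i" if "i \<le> p" for i
      using x that by (simp add: unit_cube_def)
    then have s0: "0 \<le> s x"
      unfolding s_def by (intro sum_nonneg) simp
    have r0: "0 \<le> r x i" for i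
      using x0 by (simp add: r_def)
    have "(\<Sum>i\<le>p. r x i) = (s x + max 0 (1 - s x)) / max 1 (s x)"
      by (simp add: r_def s_def sum_divide_distrib [symmetric] sum.distrib)
    also have "\<dots> = 1"
      by (simp add: max_def)
    finally have sum1: "(\<Sum>i\<le>p. r x i) = 1" .
    have r1: "r x i \<le> 1" for i
    proof (cases "i \<le> p")
      case True
      then show ?thesis
        using member_le_sum[of i "{..p}" "r x"] r0 sum1 by simp
    qed (simp add: r_def)
    have "\<forall>i>p. r x i = 0"
      by (simp add: r_def)
    with r0 r1 sum1 show ?thesis
      unfolding standard_simplex_def by blast
  qed
  moreover have "r x = x" if x: "x \<in> standard_simplex p" for x
  proof
    fix i
    have "s x = 1"
      using x by (simp add: standard_simplex_def s_def)
    then show "r x i = x i"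
      using x by (simp add: standard_simplex_def r_def)
  qed
  ultimately show ?thesis
    unfolding retract_of_def retraction_def by blast
qed

corollary brouwer_standard_simplex:
  assumes "continuous_on (standard_simplex p) f" "f \<in> standard_simplex p \<rightarrow> standard_simplex p"
  shows "\<exists>x\<in>standard_simplex p. f x = x"
  using retract_fixpoint_property[OF standard_simplex_retract_of_unit_cube brouwer_unit_cube assms]
  by blast

theorem KKM_standard_simplex:
  fixes F :: "nat \<Rightarrow> (nat \<Rightarrow> real) set"
  assumes closed: "\<And>i. i \<le> p \<Longrightarrow> closed (F i)"
    and cover: "\<And>x. x \<in> standard_simplex p \<Longrightarrow> \<exists>i\<le>p. 0 < x i \<and> x \<in> F i"
  shows "\<exists>x\<in>standard_simplex p. \<forall>i\<le>p. x \<in> F i"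
proof (rule ccontr)
  \<comment> \<open>Without a common point, \<open>\<phi>\<close> below is a continuous self-map of the simplex. At a fixed
    point y, some j with \<open>y j > 0\<close> has \<open>infdist y (F j) = 0\<close>, which forces \<open>d y = 0\<close>, i.e.
    y lies in every F i.\<close>
  assume none: "\<not> ?thesis"
  \<comment> \<open>Needed because \<open>infdist x {} = 0\<close>; the vertices of the simplex provide the points.\<close>
  have "F i \<noteq> {}" if "i \<le> p" for i
  proof -
    have "(\<lambda>j. if j = i then 1 else 0) \<in> standard_simplex p"
      using that by (simp add: standard_simplex_def)
    then show ?thesis
      using cover by (fastforce split: if_splits)
  qed
  then have F_iff: "x \<in> F i \<longleftrightarrow> infdist x (F i) = 0" if "i \<le> p" for x i
    using in_closed_iff_infdist_zero closed that by blast
  define d where "d x = (\<Sum>j\<le>p. infdist x (F j))" for x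
  define \<phi> where "\<phi> x = (\<lambda>i. if i \<le> p then (x i + infdist x (F i)) / (1 + d x) else 0)" for x
  have d0: "0 \<le> d x" for x
    by (simp add: d_def sum_nonneg infdist_nonneg)
  have d1: "1 + d x \<noteq> 0" for x
    using d0[of x] by linarith
  have "continuous_on (standard_simplex p) d"
    unfolding d_def by (intro continuous_intros)
  then have "continuous_on (standard_simplex p) (\<lambda>x. \<phi> x i)" for i
    unfolding \<phi>_def by (cases "i \<le> p") (auto intro!: continuous_intros simp: d1)
  then have "continuous_on (standard_simplex p) \<phi>"
    by (rule continuous_on_coordinatewise_then_product)
  moreover have "\<phi> x \<in> standard_simplex p" if x: "x \<in> standard_simplex p" for x
  proof -
    have \<phi>0: "0 \<le> \<phi> x i" for i
      using x d0[of x] by (simp add: \<phi>_def standard_simplex_def infdist_nonneg)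
    have "(\<Sum>i\<le>p. \<phi> x i) = ((\<Sum>i\<le>p. x i) + d x) / (1 + d x)"
      by (simp add: \<phi>_def d_def sum_divide_distrib [symmetric] sum.distrib)
    also have "\<dots> = 1"
      using x d0[of x] by (simp add: standard_simplex_def)
    finally have sum1: "(\<Sum>i\<le>p. \<phi> x i) = 1" .
    have "\<phi> x i \<le> 1" for i
    proof (cases "i \<le> p")
      case True
      then show ?thesis
        using member_le_sum[of i "{..p}" "\<phi> x"] \<phi>0 sum1 by simp
    qed (simp add: \<phi>_def)
    with \<phi>0 sum1 show ?thesis
      by (simp add: standard_simplex_def \<phi>_def)
  qed
  ultimately obtain y where y: "y \<in> standard_simplex p" and fix_y: "\<phi> y = y"
    using brouwer_standard_simplex by blast
  obtain i where i: "i \<le> p" "y \<notin> F i"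
    using none y by blast
  have "0 < d y"
    unfolding d_def using i F_iff[of i y]
    by (intro sum_pos2[of "{..p}" i]) (auto simp: infdist_nonneg order_less_le)
  moreover obtain j where j: "j \<le> p" "0 < y j" "y \<in> F j"
    using cover y by blast
  then have "y j = y j / (1 + d y)"
    using fun_cong[OF fix_y, of j] F_iff[of j y] by (simp add: \<phi>_def)
  ultimately show False
    using j(2) d0[of y] by (simp add: field_simps)
qed

lemma tvs_continuous_on_add:
  fixes f g :: "'a::topological_space \<Rightarrow> 'b::{real_vector,topological_space}"
  assumes "is_tvs TYPE('b)" "continuous_on S f" "continuous_on S g"
  shows "continuous_on S (\<lambda>x. f x + g x)"
proof -
  have "continuous_on UNIV (\<lambda>p::'b \<times> 'b. fst p + snd p)"
    using assms(1) by (simp add: is_tvs_def)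
  from continuous_on_compose2[OF this continuous_on_Pair[OF assms(2,3)]] show ?thesis
    by simp
qed

lemma tvs_continuous_on_scaleR:
  fixes c :: "'a::topological_space \<Rightarrow> real" and g :: "'a \<Rightarrow> 'b::{real_vector,topological_space}"
  assumes "is_tvs TYPE('b)" "continuous_on S c" "continuous_on S g"
  shows "continuous_on S (\<lambda>x. c x *\<^sub>R g x)"
proof -
  have "continuous_on UNIV (\<lambda>p::real \<times> 'b. fst p *\<^sub>R snd p)"
    using assms(1) by (simp add: is_tvs_def)
  from continuous_on_compose2[OF this continuous_on_Pair[OF assms(2,3)]] show ?thesis
    by simp
qed

lemma tvs_continuous_on_sum:
  fixes f :: "'i \<Rightarrow> 'a::topological_space \<Rightarrow> 'b::{real_vector,topological_space}"
  assumes tvs: "is_tvs TYPE('b)" and "finite I" "\<And>i. i \<in> I \<Longrightarrow> continuous_on S (f i)"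
  shows "continuous_on S (\<lambda>x. \<Sum>i\<in>I. f i x)"
  using assms(2,3)
proof (induction I rule: finite_induct)
  case (insert i I)
  then show ?case
    by (simp add: tvs_continuous_on_add[OF tvs])
qed simp

lemma compactly_closed_INT:
  fixes G :: "'i \<Rightarrow> 'a::topological_space set"
  assumes "\<And>i. i \<in> I \<Longrightarrow> compactly_closed (G i)"
  shows "compactly_closed (\<Inter>i\<in>I. G i)"
  unfolding compactly_closed_def
proof (intro allI impI)
  fix M :: "'a set"
  assume "compact M"
  then have "closedin (top_of_set M) (G i \<inter> M)" if "i \<in> I" for i
    using assms that by (simp add: compactly_closed_def)
  then have "closedin (top_of_set M) (\<Inter>(insert M ((\<lambda>i. G i \<inter> M) ` I)))"
    by (intro closedin_Inter) auto
  moreover have "\<Inter>(insert M ((\<lambda>i. G i \<inter> M) ` I)) = (\<Inter>i\<in>I. G i) \<inter> M"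
    by auto
  ultimately show "closedin (top_of_set M) ((\<Inter>i\<in>I. G i) \<inter> M)"
    by simp
qed

theorem KKM_tvs:
  fixes \<Gamma> :: "'a::{real_vector,topological_space} \<Rightarrow> 'a set"
  assumes tvs: "is_tvs TYPE('a)" and A: "finite A" "A \<noteq> {}"
    and closed: "\<And>a. a \<in> A \<Longrightarrow> compactly_closed (\<Gamma> a)"
    and KKM: "\<And>B. B \<subseteq> A \<Longrightarrow> convex hull B \<subseteq> (\<Union>b\<in>B. \<Gamma> b)"
  shows "(\<Inter>a\<in>A. \<Gamma> a) \<noteq> {}"
proof -
  obtain p where "card A = Suc p"
    using A by (metis card_gt_0_iff gr0_implies_Suc)
  then obtain a where a: "bij_betw a {..p} A"
    using ex_bij_betw_nat_finite[OF A(1)] by (metis atLeast0LessThan lessThan_Suc_atMost)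
  then have aA: "a i \<in> A" if "i \<le> p" for i
    using that by (auto simp: bij_betw_def)
  define S where "S = standard_simplex p"
  define \<pi> where "\<pi> t = (\<Sum>i\<le>p. t i *\<^sub>R a i)" for t :: "nat \<Rightarrow> real"
  define F where "F i = S \<inter> \<pi> -` \<Gamma> (a i)" for i
  have cont: "continuous_on S \<pi>"
    unfolding \<pi>_def
    by (intro tvs_continuous_on_sum[OF tvs] tvs_continuous_on_scaleR[OF tvs] continuous_intros) auto
  have "closed (F i)" if "i \<le> p" for i
  proof -
    have "closedin (top_of_set (\<pi> ` S)) (\<Gamma> (a i) \<inter> \<pi> ` S)"
      using closed[OF aA[OF that]] compact_continuous_image[OF cont]
      by (simp add: compactly_closed_def S_def compact_standard_simplex)
    then have "closedin (top_of_set S) (S \<inter> \<pi> -` (\<Gamma> (a i) \<inter> \<pi> ` S))"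
      by (rule continuous_closedin_preimage_gen[OF cont, rotated]) blast
    moreover have "S \<inter> \<pi> -` (\<Gamma> (a i) \<inter> \<pi> ` S) = F i"
      by (auto simp: F_def)
    ultimately show ?thesis
      using closedin_closed_trans compact_imp_closed compact_standard_simplex S_def by metis
  qed
  moreover have "\<exists>i\<le>p. 0 < t i \<and> t \<in> F i" if t: "t \<in> S" for t
  proof -
    define J where "J = {i. i \<le> p \<and> 0 < t i}"
    have J: "J \<subseteq> {..p}" "finite J"
      by (auto simp: J_def)
    have zero: "t i = 0" if "i \<in> {..p} - J" for i
      using t that by (auto simp: S_def standard_simplex_def J_def less_le)
    have "(\<Sum>i\<in>J. t i) = (\<Sum>i\<le>p. t i)"
      by (rule sum.mono_neutral_left) (use J zero in auto)
    then have "(\<Sum>i\<in>J. t i) = 1"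
      using t by (simp add: S_def standard_simplex_def)
    then have "(\<Sum>i\<in>J. t i *\<^sub>R a i) \<in> convex hull (a ` J)"
      by (intro convex_sum J(2)) (auto simp: J_def hull_inc)
    moreover have "\<pi> t = (\<Sum>i\<in>J. t i *\<^sub>R a i)"
      unfolding \<pi>_def by (rule sum.mono_neutral_right) (use J zero in auto)
    moreover have "a ` J \<subseteq> A"
      using aA by (auto simp: J_def)
    ultimately have "\<pi> t \<in> (\<Union>b\<in>a ` J. \<Gamma> b)"
      using KKM by (metis subsetD)
    then obtain j where "j \<in> J" "\<pi> t \<in> \<Gamma> (a j)"
      by auto
    then show ?thesis
      using t by (auto simp: J_def F_def)
  qed
  ultimately obtain t where "\<forall>i\<le>p. t \<in> F i"
    using KKM_standard_simplex[of p F] by (auto simp: S_def)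
  then have "\<pi> t \<in> (\<Inter>a\<in>A. \<Gamma> a)"
    using a by (auto simp: F_def bij_betw_def)
  then show ?thesis
    by blast
qed

lemma KKM_finite_intersection:
  fixes D :: "'a::{real_vector,topological_space} set"
    and G :: "'k \<Rightarrow> 'a set" and R :: "'a \<Rightarrow> 'a \<Rightarrow> bool"
  assumes tvs: "is_tvs TYPE('a)" and convD: "convex D"
    and closed: "\<And>y. y \<in> F \<Longrightarrow> compactly_closed (G y)"
    and R: "\<And>A w. A \<subseteq> D \<Longrightarrow> A \<noteq> {} \<Longrightarrow> finite A \<Longrightarrow> w \<in> convex hull A \<Longrightarrow> \<exists>x\<in>A. R x w"
    and z: "\<And>y. y \<in> F \<Longrightarrow> z y \<in> D" "\<And>y x. y \<in> F \<Longrightarrow> x \<in> D \<Longrightarrow> R (z y) x \<Longrightarrow> x \<in> G y"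
    and F: "finite F"
  shows "(\<Inter>y\<in>F. G y) \<noteq> {}"
proof (cases "F = {}")
  case False
  \<comment> \<open>The hypothesis on R says exactly that \<open>\<Gamma>\<close> is a KKM map on the selected points \<open>z ` F\<close>.\<close>
  define \<Gamma> where "\<Gamma> a = (\<Inter>y\<in>{y\<in>F. z y = a}. G y)" for a
  have "(\<Inter>a\<in>z ` F. \<Gamma> a) \<noteq> {}"
  proof (rule KKM_tvs[OF tvs])
    show "finite (z ` F)" "z ` F \<noteq> {}"
      using F False by auto
    show "compactly_closed (\<Gamma> a)" for a
      unfolding \<Gamma>_def using closed by (intro compactly_closed_INT) auto
    show "convex hull B \<subseteq> (\<Union>b\<in>B. \<Gamma> b)" if B: "B \<subseteq> z ` F" for B
    proof
      fix w
      assume w: "w \<in> convex hull B"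
      have "B \<subseteq> D"
        using B z(1) by auto
      moreover have "finite B"
        using B F finite_surj by blast
      moreover have "B \<noteq> {}"
        using w by auto
      ultimately obtain x where "x \<in> B" "R x w"
        using R[of B w] w by blast
      moreover have "w \<in> D"
        using w hull_minimal[of B D convex, OF \<open>B \<subseteq> D\<close> convD] by blast
      ultimately have "w \<in> \<Gamma> x"
        unfolding \<Gamma>_def using z(2) by blast
      with \<open>x \<in> B\<close> show "w \<in> (\<Union>b\<in>B. \<Gamma> b)"
        by blast
    qed
  qed
  moreover have "(\<Inter>a\<in>z ` F. \<Gamma> a) \<subseteq> (\<Inter>y\<in>F. G y)"
    by (auto simp: \<Gamma>_def)
  ultimately show ?thesis
    by blast
qed simp

lemma compactly_closed_fip_coercive:
  fixes G :: "'k \<Rightarrow> 'a::topological_space set"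
  assumes M: "compact M" and closed: "\<And>y. y \<in> K \<Longrightarrow> compactly_closed (G y)"
    and L: "finite L" "L \<subseteq> K" "(\<Inter>y\<in>L. G y) \<subseteq> M"
    and fip: "\<And>F. F \<subseteq> K \<Longrightarrow> finite F \<Longrightarrow> (\<Inter>y\<in>F. G y) \<noteq> {}"
  shows "\<exists>x\<in>M. \<forall>y\<in>K. x \<in> G y"
proof -
  have "\<forall>y\<in>K. \<exists>T. closed T \<and> G y \<inter> M = M \<inter> T"
    using closed M by (simp add: compactly_closed_def closedin_closed)
  then obtain T where T: "\<And>y. y \<in> K \<Longrightarrow> closed (T y) \<and> G y \<inter> M = M \<inter> T y"
    by metis
  have "M \<inter> (\<Inter>y\<in>K. T y) \<noteq> {}"
  proof (rule compact_imp_fip_image[OF M])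
    show "closed (T y)" if "y \<in> K" for y
      using T that by blast
    fix F
    assume "finite F" "F \<subseteq> K"
    then obtain x where x: "x \<in> (\<Inter>y\<in>F \<union> L. G y)"
      using fip[of "F \<union> L"] L by blast
    then have "x \<in> M"
      using L(3) by blast
    with x T \<open>F \<subseteq> K\<close> show "M \<inter> (\<Inter>y\<in>F. T y) \<noteq> {}"
      by blast
  qed
  then show ?thesis
    using T by blast
qed

theorem KKM_coercive_common_point:
  fixes D :: "'a::{real_vector,topological_space} set"
    and G :: "'k \<Rightarrow> 'a set" and R :: "'a \<Rightarrow> 'a \<Rightarrow> bool"
  assumes tvs: "is_tvs TYPE('a)" and convD: "convex D" and K: "K \<noteq> {}"
    and G: "\<And>y. y \<in> K \<Longrightarrow> G y \<subseteq> D" "\<And>y. y \<in> K \<Longrightarrow> compactly_closed (G y)"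
    and R: "\<And>A w. A \<subseteq> D \<Longrightarrow> A \<noteq> {} \<Longrightarrow> finite A \<Longrightarrow> w \<in> convex hull A \<Longrightarrow> \<exists>x\<in>A. R x w"
    and select: "\<And>y. y \<in> K \<Longrightarrow> \<exists>z\<in>D. \<forall>x\<in>D. R z x \<longrightarrow> x \<in> G y"
    and M: "compact M" and L: "finite L" "L \<subseteq> K"
    and coercive: "\<And>x. x \<in> D - M \<Longrightarrow> \<exists>y\<in>L. x \<notin> G y"
  shows "\<exists>x\<in>M. \<forall>y\<in>K. x \<in> G y"
proof -
  obtain z where z: "\<And>y. y \<in> K \<Longrightarrow> z y \<in> D" "\<And>y x. y \<in> K \<Longrightarrow> x \<in> D \<Longrightarrow> R (z y) x \<Longrightarrow> x \<in> G y"
    using select by metis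
  have fip: "(\<Inter>y\<in>F. G y) \<noteq> {}" if "F \<subseteq> K" "finite F" for F
    using that G(2) z by (intro KKM_finite_intersection[OF tvs convD _ R, where z = z]) auto
  obtain y0 where y0: "y0 \<in> K"
    using K by blast
  have "x \<in> M" if x: "x \<in> (\<Inter>y\<in>insert y0 L. G y)" for x
  proof (rule ccontr)
    assume "x \<notin> M"
    moreover have "x \<in> D"
      using x G(1)[OF y0] by blast
    ultimately obtain y where "y \<in> L" "x \<notin> G y"
      using coercive by blast
    with x show False
      by blast
  qed
  then have sub: "(\<Inter>y\<in>insert y0 L. G y) \<subseteq> M"
    by (rule subsetI)
  have L': "finite (insert y0 L)" "insert y0 L \<subseteq> K"
    using L y0 by auto
  show ?thesis
    by (rule compactly_closed_fip_coercive[OF M G(2) L' sub fip])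
qed

theorem corollary3p5:
  fixes D :: "'x::{real_vector,topological_space} set"
    and K :: "'k set"
    and C :: "'y::{real_vector,topological_space} set"
    and f :: "'x \<Rightarrow> 'k \<Rightarrow> 'y set"
    and g :: "'x \<Rightarrow> 'x \<Rightarrow> 'y set"
    and M :: "'x set"
    and L :: "'k set"
  assumes tvsX: "is_tvs TYPE('x)"
    and tvsY: "is_tvs TYPE('y)"
    and convD: "convex D"
    and K_ne: "K \<noteq> {}"
    and coneC: "cone C"
    and intC: "interior C \<noteq> {}"
    and i: "\<forall>y\<in>K. compactly_closed {x\<in>D. \<not> (f x y \<subseteq> uminus ` interior C)}"
    and ii: "\<forall>A. A \<subseteq> D \<and> A \<noteq> {} \<and> finite A \<longrightarrow>
               (\<forall>z\<in>convex hull A. \<exists>x\<in>A. g x z \<subseteq> uminus ` C)"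
    and iii: "\<forall>y\<in>K. \<exists>z\<in>D. \<forall>x\<in>D. g z x \<subseteq> uminus ` C \<longrightarrow> \<not> (f x y \<subseteq> uminus ` interior C)"
    and iv_M: "M \<noteq> {}" "compact M" "M \<subseteq> D"
    and iv_L: "finite L" "L \<subseteq> K"
    and iv: "\<forall>x\<in>D - M. \<exists>y\<in>L. f x y \<subseteq> uminus ` interior C"
  shows "\<exists>xb\<in>M. \<forall>y\<in>K. \<not> (f xb y \<subseteq> uminus ` interior C)"
proof -
  define G where "G y = {x\<in>D. \<not> f x y \<subseteq> uminus ` interior C}" for y
  have "\<exists>x\<in>M. \<forall>y\<in>K. x \<in> G y"
  proof (rule KKM_coercive_common_point[OF tvsX convD K_ne _ _ _ _ iv_M(2) iv_L,
        where R = "\<lambda>x w. g x w \<subseteq> uminus ` C"])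
    show "G y \<subseteq> D" "compactly_closed (G y)" if "y \<in> K" for y
      using i that by (auto simp: G_def)
    show "\<exists>x\<in>A. g x w \<subseteq> uminus ` C"
      if "A \<subseteq> D" "A \<noteq> {}" "finite A" "w \<in> convex hull A" for A w
      using ii that by blast
    show "\<exists>z\<in>D. \<forall>x\<in>D. g z x \<subseteq> uminus ` C \<longrightarrow> x \<in> G y" if "y \<in> K" for y
      using iii that by (simp add: G_def)
    show "\<exists>y\<in>L. x \<notin> G y" if "x \<in> D - M" for x
      using iv that by (simp add: G_def)
  qed
  then obtain x where x: "x \<in> M" "\<forall>y\<in>K. x \<in> G y"
    by blast
  then have "\<forall>y\<in>K. \<not> f x y \<subseteq> uminus ` interior C"
    by (simp add: G_def)
  then show ?thesis
    using x(1) by (rule bexI)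
qed

end
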